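(* Let $\mathcal{G}=\{V,E,\boldsymbol{W}\}$ be an undirected graph with $p$ vertices $V=\{1,\dots,p\}$ and symmetric nonnegative weighted adjacency matrix $\boldsymbol{W}$. Let $\boldsymbol{L}$ be its normalized graph Laplacian, with orthonormal eigenvectors $\boldsymbol{u}_1,\dots,\boldsymbol{u}_p$ and associated eigenvalues $\mu_1,\dots,\mu_p$, and let $\rho(\boldsymbol{L})$ denote its spectral radius. Consider the graph signal sequence $\boldsymbol{y}_t=\boldsymbol{m}+\boldsymbol{e}_t$, $t=0,1,2,\dots$. Here $\boldsymbol{m}\in\mathbb{R}^p$ is fixed, and the $\boldsymbol{e}_t$ are temporally i.i.d. with $\boldsymbol{e}_t\sim\mathcal{N}(\boldsymbol{0},\sigma^2\boldsymbol{I})$. Fix an integer $K\ge1$ and scalar parameters $c$ and $(\psi_\ell,\varphi_\ell)$, $\ell=1,\dots,K$; a superscript $^\ast$ denotes complex conjugation. Define the parallel ARMA$_K$ graph filter output $\boldsymbol{z}_t$ by $$\boldsymbol{x}_{\ell,t}=\psi_\ell\boldsymbol{L}\boldsymbol{x}_{\ell,t-1}+\varphi_\ell\boldsymbol{y}_t,\quad \boldsymbol{x}_{\ell,-1}=\boldsymbol{0},\quad \ell=1,\dots,K,$$ $$\boldsymbol{z}_t=\sum_{\ell=1}^K\boldsymbol{x}_{\ell,t}+c\,\boldsymbol{y}_t.$$ Suppose $\max_\ell\{|\psi_\ell|\}\,\rho(\boldsymbol{L})<1$. Then, as $t\to\infty$, $\boldsymbol{z}_t$ is asymptotically distributed as $\mathcal{N}(\bar{\boldsymbol{z}}_\infty,\boldsymbol{Q}_\infty)$,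 where the two parameters are as follows. - $\bar{\boldsymbol{z}}_\infty=\sum_{i=1}^p h(\mu_i)(\boldsymbol{u}_i^\top\boldsymbol{m})\boldsymbol{u}_i$ is the signal $\boldsymbol{m}$ graph-filtered by the frequency response $$h(\mu)=c+\sum_{\ell=1}^K\frac{\varphi_\ell}{1-\psi_\ell\mu}.$$ - The covariance is $$\boldsymbol{Q}_\infty=\sum_{i=1}^p\kappa(\mu_i)\boldsymbol{u}_i\boldsymbol{u}_i^\top,\qquad \kappa(\mu)=\sum_{\ell,\ell'=1}^K\frac{\sigma^2\varphi_\ell\varphi_{\ell'}^\ast}{1-\psi_\ell\psi_{\ell'}^\ast\mu^2}+\eta,$$ with $\eta=c\sigma^2\big(c+2\sum_{\ell=1}^K\varphi_\ell\big)$.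
   Context: The normalized graph Laplacian is the standard one, $\boldsymbol{I}-\boldsymbol{D}^{-1/2}\boldsymbol{W}\boldsymbol{D}^{-1/2}$, with $\boldsymbol{D}$ the diagonal degree matrix. "Asymptotically distributed as" means convergence in distribution as $t\to\infty$. *)

theory Defs
  imports "HOL-Probability.Probability"
begin

definition degree :: "real^'n^'n \<Rightarrow> 'n \<Rightarrow> real" where
  "degree W i = (\<Sum>j\<in>UNIV. W $ i $ j)"

definition deg_inv_sqrt :: "real^'n^'n \<Rightarrow> real^'n^'n" where
  "deg_inv_sqrt W = (\<chi> i j. if i = j then 1 / sqrt (degree W i) else 0)"

definition norm_laplacian :: "real^'n^'n \<Rightarrow> real^'n^'n" where
  "norm_laplacian W = mat 1 - deg_inv_sqrt W ** W ** deg_inv_sqrt W"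

definition cmat :: "real^'n^'m \<Rightarrow> complex^'n^'m" where
  "cmat A = (\<chi> i j. complex_of_real (A $ i $ j))"

definition cvec :: "real^'n \<Rightarrow> complex^'n" where
  "cvec v = (\<chi> i. complex_of_real (v $ i))"

definition re_vec :: "complex^'n \<Rightarrow> real^'n" where
  "re_vec v = (\<chi> i. Re (v $ i))"

definition spectral_radius :: "real^'n^'n \<Rightarrow> real" where
  "spectral_radius A = Max {cmod ev | ev. \<exists>v::complex^'n. v \<noteq> 0 \<and> cmat A *v v = ev *s v}"

definition outer :: "real^'n \<Rightarrow> real^'n^'n" where
  "outer u = (\<chi> a b. u $ a * u $ b)"

fun arma_branch :: "complex \<Rightarrow> complex \<Rightarrow> complex^'n^'n \<Rightarrow> (nat \<Rightarrow> complex^'n) \<Rightarrow> nat \<Rightarrow> complex^'n" where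
  "arma_branch psi phi L y 0 = psi *s (L *v 0) + phi *s y 0"
| "arma_branch psi phi L y (Suc t) = psi *s (L *v arma_branch psi phi L y t) + phi *s y (Suc t)"

definition arma_output :: "nat \<Rightarrow> real \<Rightarrow> (nat \<Rightarrow> complex) \<Rightarrow> (nat \<Rightarrow> complex) \<Rightarrow> complex^'n^'n \<Rightarrow> (nat \<Rightarrow> complex^'n) \<Rightarrow> nat \<Rightarrow> complex^'n" where
  "arma_output K c psi phi L y t =
     (\<Sum>l\<in>{1..K}. arma_branch (psi l) (phi l) L y t) + complex_of_real c *s y t"

text \<open>Multivariate normal N(mu, Q) (possibly degenerate), via its characteristic function.\<close>
definition gaussian_vec :: "real^'n \<Rightarrow> real^'n^'n \<Rightarrow> (real^'n) measure \<Rightarrow> bool" where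
  "gaussian_vec mu Q N \<longleftrightarrow> prob_space N \<and> sets N = sets borel \<and>
     (\<forall>s. (\<integral>x. cis (s \<bullet> x) \<partial>N) = cis (s \<bullet> mu) * complex_of_real (exp (- (s \<bullet> (Q *v s)) / 2)))"

definition converges_in_distribution :: "(nat \<Rightarrow> 'b::topological_space measure) \<Rightarrow> 'b measure \<Rightarrow> bool" where
  "converges_in_distribution Ms N \<longleftrightarrow>
     (\<forall>f::'b \<Rightarrow> real. continuous_on UNIV f \<and> bounded (range f) \<longrightarrow>
        (\<lambda>t. \<integral>x. f x \<partial>Ms t) \<longlonglongrightarrow> (\<integral>x. f x \<partial>N))"

end

theory Submission
  imports Defs
begin

text \<open>
  In an orthonormal eigenbasis u_i of L the filter acts diagonally:
  z_t = sum_(k<=t) g_k L^k (m + e_(t-k)) with the impulse response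
  g_k = (sum_l phi_l psi_l^k) + c [k = 0], which is real by hypothesis.
  So z_t is an affine image of finitely many independent N(0, sigma^2 I) vectors, hence Gaussian with
  mean sum_i a_t(mu_i) (u_i . m) u_i and covariance sigma^2 sum_i b_t(mu_i) u_i u_i^T, where
  a_t(mu) = sum_(k<=t) g_k mu^k and b_t(mu) = sum_(k<=t) (g_k mu^k)^2.
  Since characteristic functions determine laws on real^n (shown below via Stone-Weierstrass on a
  torus), z_t has the same law as the vector of this form built from e_0 alone.
  Under the stability condition a_t and b_t are partial sums of geometric series with limits
  h and kappa / sigma^2, so these coupled vectors converge pointwise, and dominated convergence
  yields convergence in distribution to N(zbar, Q).
\<close>

section \<open>Uniqueness of characteristic functions on \<open>real^'n\<close>\<close>

inductive trig_polynomial :: "(real^'n \<Rightarrow> complex) \<Rightarrow> bool" where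
  cis: "trig_polynomial (\<lambda>x. c * cis (s \<bullet> x))"
| add: "trig_polynomial f \<Longrightarrow> trig_polynomial g \<Longrightarrow> trig_polynomial (\<lambda>x. f x + g x)"

lemma trig_polynomial_const: "trig_polynomial (\<lambda>x. c)"
  using trig_polynomial.cis[of c 0] by simp

lemma trig_polynomial_cmult: "trig_polynomial f \<Longrightarrow> trig_polynomial (\<lambda>x. a * f x)"
proof (induction rule: trig_polynomial.induct)
  case (cis c s)
  then show ?case using trig_polynomial.cis[of "a * c" s] by (simp add: mult.assoc)
next
  case (add f g)
  then show ?case using trig_polynomial.add[of "\<lambda>x. a * f x" "\<lambda>x. a * g x"] by (simp add: distrib_left)
qed

lemma trig_polynomial_mult_cis:
  "trig_polynomial f \<Longrightarrow> trig_polynomial (\<lambda>x. f x * (c * cis (s \<bullet> x)))"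
proof (induction rule: trig_polynomial.induct)
  case (cis d t)
  have "(\<lambda>x. d * cis (t \<bullet> x) * (c * cis (s \<bullet> x))) = (\<lambda>x. (d * c) * cis ((t + s) \<bullet> x))"
    by (auto simp: cis_mult inner_add_left mult_ac add.commute)
  then show ?case using trig_polynomial.cis by metis
next
  case (add f g)
  then show ?case using trig_polynomial.add by (simp add: distrib_right)
qed

lemma trig_polynomial_mult:
  assumes "trig_polynomial f" "trig_polynomial g"
  shows "trig_polynomial (\<lambda>x. f x * g x)"
  using assms(2)
proof (induction rule: trig_polynomial.induct)
  case (cis c s)
  then show ?case using assms(1) trig_polynomial_mult_cis by blast
next
  case (add g1 g2)
  then show ?case
    using trig_polynomial.add[of "\<lambda>x. f x * g1 x" "\<lambda>x. f x * g2 x"] by (simp add: distrib_left)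
qed

lemma trig_polynomial_sum:
  "finite I \<Longrightarrow> (\<And>i. i \<in> I \<Longrightarrow> trig_polynomial (f i)) \<Longrightarrow> trig_polynomial (\<lambda>x. \<Sum>i\<in>I. f i x)"
  by (induction I rule: finite_induct) (auto intro: trig_polynomial_const trig_polynomial.add)

lemma trig_polynomial_cos: "trig_polynomial (\<lambda>x. complex_of_real (cos (s \<bullet> x)))"
proof -
  have "(\<lambda>x. complex_of_real (cos (s \<bullet> x))) = (\<lambda>x. (1/2) * cis (s \<bullet> x) + (1/2) * cis ((-s) \<bullet> x))"
    by (auto simp: cis.ctr complex_eq_iff)
  moreover have "trig_polynomial (\<lambda>x. (1/2) * cis (s \<bullet> x) + (1/2) * cis ((-s) \<bullet> x))"
    by (intro trig_polynomial.intros)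
  ultimately show ?thesis by simp
qed

lemma trig_polynomial_sin: "trig_polynomial (\<lambda>x. complex_of_real (sin (s \<bullet> x)))"
proof -
  have "(\<lambda>x. complex_of_real (sin (s \<bullet> x))) = (\<lambda>x. (-\<i>/2) * cis (s \<bullet> x) + (\<i>/2) * cis ((-s) \<bullet> x))"
    by (auto simp: cis.ctr complex_eq_iff)
  moreover have "trig_polynomial (\<lambda>x. (-\<i>/2) * cis (s \<bullet> x) + (\<i>/2) * cis ((-s) \<bullet> x))"
    by (intro trig_polynomial.intros)
  ultimately show ?thesis by simp
qed

lemma trig_polynomial_bounded_measurable:
  "trig_polynomial f \<Longrightarrow> f \<in> borel_measurable borel \<and> (\<exists>B. \<forall>x. norm (f x) \<le> B)"
proof (induction rule: trig_polynomial.induct)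
  case (cis c s)
  have "norm (c * cis (s \<bullet> x)) \<le> norm c" for x by (simp add: norm_mult)
  then show ?case by (auto intro!: borel_measurable_continuous_onI continuous_intros)
next
  case (add f g)
  then obtain B1 B2 where "\<forall>x. norm (f x) \<le> B1" "\<forall>x. norm (g x) \<le> B2" by blast
  then have "\<forall>x. norm (f x + g x) \<le> B1 + B2" by (meson add_mono norm_triangle_le)
  with add show ?case by auto
qed

lemma integral_trig_polynomial_eq:
  fixes \<mu> \<nu> :: "(real^'n) measure"
  assumes "prob_space \<mu>" "sets \<mu> = sets borel" "prob_space \<nu>" "sets \<nu> = sets borel"
    and char_eq: "\<And>s. (\<integral>x. cis (s \<bullet> x) \<partial>\<mu>) = (\<integral>x. cis (s \<bullet> x) \<partial>\<nu>)"
    and "trig_polynomial f"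
  shows "(\<integral>x. f x \<partial>\<mu>) = (\<integral>x. f x \<partial>\<nu>)"
proof -
  have integrable: "integrable M g"
    if "prob_space M" "sets M = sets borel" "trig_polynomial g" for M :: "(real^'n) measure" and g
  proof -
    interpret prob_space M by fact
    obtain B where "\<forall>x. norm (g x) \<le> B" "g \<in> borel_measurable borel"
      using trig_polynomial_bounded_measurable[OF \<open>trig_polynomial g\<close>] by blast
    then show ?thesis
      using measurable_cong_sets[OF \<open>sets M = sets borel\<close> refl]
      by (intro integrable_const_bound[where B=B]) auto
  qed
  from \<open>trig_polynomial f\<close> show ?thesis
  proof (induction rule: trig_polynomial.induct)
    case (cis c s)
    then show ?case using char_eq[of s] by simp
  next
    case (add f g)
    with integrable assms(1-4) show ?case by (simp add: Bochner_Integration.integral_add)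
  qed
qed

definition cube :: "real \<Rightarrow> (real^'n) set" where
  "cube r = {x. \<forall>j. \<bar>x $ j\<bar> \<le> r}"

lemma compact_cube: "compact (cube r)"
proof -
  have "cube r = cbox (- (\<chi> _. r)) (\<chi> _. r)"
    unfolding cube_def set_eq_iff mem_box_cart by (simp add: abs_le_iff minus_le_iff) blast
  then show ?thesis by (metis compact_cbox)
qed

text \<open>Polynomials in the coordinates of \<open>torus_embed r\<close> are trigonometric polynomials, and on
  \<open>cube r\<close> it identifies only boundary points.\<close>

definition torus_embed :: "real \<Rightarrow> real^'n \<Rightarrow> (real^'n) \<times> (real^'n)" where
  "torus_embed r x = ((\<chi> j. cos (pi / r * x $ j)), (\<chi> j. sin (pi / r * x $ j)))"

lemma continuous_on_torus_embed: "continuous_on UNIV (torus_embed r)"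
  unfolding torus_embed_def by (intro continuous_intros continuous_on_vec_lambda)

lemma bounded_linear_pair_expansion:
  fixes p :: "(real^'n) \<times> (real^'n) \<Rightarrow> real"
  assumes "bounded_linear p"
  shows "p (a, b) = (\<Sum>j\<in>UNIV. a $ j * p (axis j 1, 0)) + (\<Sum>j\<in>UNIV. b $ j * p (0, axis j 1))"
proof -
  interpret linear p using assms bounded_linear.linear by blast
  have "p (a, 0) = p (\<Sum>j\<in>UNIV. a $ j *\<^sub>R (axis j 1, 0))"
    using basis_expansion[of a] by (simp add: scalar_mult_eq_scaleR sum_prod)
  also have "\<dots> = (\<Sum>j\<in>UNIV. a $ j * p (axis j 1, 0))"
    by (simp only: sum scale real_scaleR_def)
  finally have first: "p (a, 0) = (\<Sum>j\<in>UNIV. a $ j * p (axis j 1, 0))" .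
  have "p (0, b) = p (\<Sum>j\<in>UNIV. b $ j *\<^sub>R (0, axis j 1))"
    using basis_expansion[of b] by (simp add: scalar_mult_eq_scaleR sum_prod)
  also have "\<dots> = (\<Sum>j\<in>UNIV. b $ j * p (0, axis j 1))"
    by (simp only: sum scale real_scaleR_def)
  finally have second: "p (0, b) = (\<Sum>j\<in>UNIV. b $ j * p (0, axis j 1))" .
  have "p (a, b) = p (a, 0) + p (0, b)"
    by (metis add_Pair add.right_neutral add_0 add)
  with first second show ?thesis by simp
qed

lemma trig_polynomial_torus_embed:
  fixes p :: "(real^'n) \<times> (real^'n) \<Rightarrow> real"
  assumes "real_polynomial_function p"
  shows "trig_polynomial (\<lambda>x. complex_of_real (p (torus_embed r x)))"
  using assms
proof (induction rule: real_polynomial_function.induct)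
  case (linear f)
  define \<omega> :: "'n \<Rightarrow> real^'n" where "\<omega> j = (pi / r) *\<^sub>R axis j 1" for j
  have "f (torus_embed r x) =
     (\<Sum>j\<in>UNIV. f (axis j 1, 0) * cos (\<omega> j \<bullet> x)) + (\<Sum>j\<in>UNIV. f (0, axis j 1) * sin (\<omega> j \<bullet> x))" for x
    using bounded_linear_pair_expansion[OF linear, of "\<chi> j. cos (pi / r * x $ j)" "\<chi> j. sin (pi / r * x $ j)"]
    by (simp add: torus_embed_def \<omega>_def inner_axis' mult.commute)
  then have "(\<lambda>x. complex_of_real (f (torus_embed r x))) =
     (\<lambda>x. (\<Sum>j\<in>UNIV. complex_of_real (f (axis j 1, 0)) * complex_of_real (cos (\<omega> j \<bullet> x)))
        + (\<Sum>j\<in>UNIV. complex_of_real (f (0, axis j 1)) * complex_of_real (sin (\<omega> j \<bullet> x))))"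
    by simp
  moreover have "trig_polynomial (\<lambda>x.
        (\<Sum>j\<in>UNIV. complex_of_real (f (axis j 1, 0)) * complex_of_real (cos (\<omega> j \<bullet> x)))
      + (\<Sum>j\<in>UNIV. complex_of_real (f (0, axis j 1)) * complex_of_real (sin (\<omega> j \<bullet> x))))"
    by (intro trig_polynomial.add trig_polynomial_sum trig_polynomial_cmult
        trig_polynomial_cos trig_polynomial_sin) simp_all
  ultimately show ?case by simp
next
  case (const c)
  then show ?case by (rule trig_polynomial_const)
next
  case (add f g)
  then show ?case by (simp add: trig_polynomial.add)
next
  case (mult f g)
  then show ?case by (simp add: trig_polynomial_mult)
qed

lemma torus_embed_periodic:
  assumes "r > 0"
  shows "\<exists>x'\<in>cube r. torus_embed r x' = torus_embed r x"
proof -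
  define k where "k j = \<lfloor>(x $ j + r) / (2 * r)\<rfloor>" for j
  define x' where "x' = (\<chi> j. x $ j - 2 * r * k j)"
  have "\<bar>x' $ j\<bar> \<le> r" for j
  proof -
    have "k j \<le> (x $ j + r) / (2 * r)" "(x $ j + r) / (2 * r) < k j + 1"
      unfolding k_def by linarith+
    then have "2 * r * k j \<le> x $ j + r" "x $ j + r < 2 * r * (k j + 1)"
      using assms by (auto simp: field_simps)
    then show ?thesis unfolding x'_def by (simp add: algebra_simps)
  qed
  then have "x' \<in> cube r" unfolding cube_def by blast
  have "pi / r * x' $ j = pi / r * x $ j - 2 * pi * k j" for j
    unfolding x'_def using assms by (simp add: field_simps)
  moreover have "cos (a - 2 * pi * of_int n) = cos a" "sin (a - 2 * pi * of_int n) = sin a" for a n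
    by (simp_all add: cos_diff sin_diff)
  ultimately have "torus_embed r x' = torus_embed r x"
    unfolding torus_embed_def by simp
  with \<open>x' \<in> cube r\<close> show ?thesis by blast
qed

lemma cos_sin_eq_imp_eq_or_endpoint:
  assumes "r > 0" "\<bar>a\<bar> \<le> r" "\<bar>b\<bar> \<le> r"
    and "cos (pi / r * a) = cos (pi / r * b)" "sin (pi / r * a) = sin (pi / r * b)"
  shows "a = b \<or> \<bar>a\<bar> = r"
proof -
  have "cos (pi / r * a - pi / r * b) = 1"
    using assms(4,5) by (simp add: cos_diff power2_eq_square[symmetric])
  then obtain n :: int where "pi / r * a - pi / r * b = n * 2 * pi"
    by (auto simp: cos_one_2pi_int)
  then have "pi * (a - b) = pi * (2 * n * r)"
    using \<open>r > 0\<close> by (simp add: field_simps)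
  then have diff: "a - b = 2 * n * r" by simp
  then have "\<bar>n\<bar> * r \<le> r"
    using assms(2,3) by (simp add: abs_mult)
  then have "\<bar>n\<bar> \<le> 1"
    using \<open>r > 0\<close> by simp
  then have "n \<in> {-1, 0, 1}" by auto
  then show ?thesis using diff assms(2,3) by auto
qed

lemma torus_embed_eq_imp_boundary:
  assumes "r > 0" "x \<in> cube r" "y \<in> cube r" "torus_embed r x = torus_embed r y" "x \<noteq> y"
  obtains j where "\<bar>x $ j\<bar> = r" "\<bar>y $ j\<bar> = r"
proof -
  obtain j where "x $ j \<noteq> y $ j" using \<open>x \<noteq> y\<close> by (auto simp: vec_eq_iff)
  moreover have "cos (pi / r * x $ j) = cos (pi / r * y $ j)" "sin (pi / r * x $ j) = sin (pi / r * y $ j)"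
    using assms(4) unfolding torus_embed_def by (auto simp: vec_eq_iff)
  ultimately have "\<bar>x $ j\<bar> = r" "\<bar>y $ j\<bar> = r"
    using cos_sin_eq_imp_eq_or_endpoint[OF \<open>r > 0\<close>, of "x $ j" "y $ j"]
      cos_sin_eq_imp_eq_or_endpoint[OF \<open>r > 0\<close>, of "y $ j" "x $ j"] assms(2,3)
    unfolding cube_def by auto
  then show thesis by (rule that)
qed

text \<open>\<open>torus_embed r\<close> restricted to \<open>cube r\<close> is a quotient map, being a continuous map from a
  compact space onto a Hausdorff one.\<close>

lemma continuous_factor_torus_embed:
  fixes F :: "real^'n \<Rightarrow> real"
  assumes "r > 0" and F_cont: "continuous_on UNIV F"
    and F_boundary: "\<And>x j. \<bar>x $ j\<bar> = r \<Longrightarrow> F x = 0"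
  obtains g where "continuous_on (torus_embed r ` cube r) g" "\<And>x. x \<in> cube r \<Longrightarrow> g (torus_embed r x) = F x"
proof -
  have well_defined: "F x = F y"
    if xy: "x \<in> cube r" "y \<in> cube r" "torus_embed r x = torus_embed r y" for x y
  proof (cases "x = y")
    case False
    then obtain j where "\<bar>x $ j\<bar> = r" "\<bar>y $ j\<bar> = r"
      using torus_embed_eq_imp_boundary[OF \<open>r > 0\<close> xy False] by blast
    then show ?thesis using F_boundary by metis
  qed simp
  define g where "g y = F (SOME x. x \<in> cube r \<and> torus_embed r x = y)" for y
  have gF: "g (torus_embed r x) = F x" if "x \<in> cube r" for x
  proof -
    have "\<exists>x'. x' \<in> cube r \<and> torus_embed r x' = torus_embed r x" using that by blast
    then have "(SOME x'. x' \<in> cube r \<and> torus_embed r x' = torus_embed r x) \<in> cube r \<and>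
        torus_embed r (SOME x'. x' \<in> cube r \<and> torus_embed r x' = torus_embed r x) = torus_embed r x"
      by (rule someI_ex)
    then show ?thesis unfolding g_def using well_defined that by blast
  qed
  have "quotient_map (top_of_set (cube r)) (top_of_set (torus_embed r ` cube r)) (torus_embed r)"
  proof (rule continuous_imp_quotient_map)
    show "continuous_map (top_of_set (cube r)) (top_of_set (torus_embed r ` cube r)) (torus_embed r)"
      using continuous_on_torus_embed
      by (auto simp: continuous_map_in_subtopology intro: continuous_on_subset)
    show "compact_space (top_of_set (cube r))"
      by (rule compact_space_subtopology) (simp add: compact_cube)
    show "Hausdorff_space (top_of_set (torus_embed r ` cube r))"
      by (simp add: Hausdorff_space_subtopology)
  qed simp
  moreover have "continuous_map (top_of_set (cube r)) euclidean (g \<circ> torus_embed r)"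
  proof -
    have "continuous_on (cube r) (g \<circ> torus_embed r)"
      using continuous_on_subset[OF F_cont] by (rule continuous_on_eq) (auto simp: gF)
    then show ?thesis by simp
  qed
  ultimately have "continuous_map (top_of_set (torus_embed r ` cube r)) euclidean g"
    using continuous_compose_quotient_map by blast
  with gF that show ?thesis by auto
qed

lemma tail_measure_small:
  fixes M :: "(real^'n) measure"
  assumes "prob_space M" "sets M = sets borel" "e > 0"
  shows "\<exists>R0. \<forall>R\<ge>R0. measure M {x. R < norm x} < e"
proof -
  interpret prob_space M by fact
  define A where "A n = {x::real^'n. real n < norm x}" for n
  have A_sets: "range A \<subseteq> sets M" unfolding A_def assms(2) by auto
  have "decseq A" unfolding A_def decseq_def by auto
  moreover have "(\<Inter>n. A n) = {}"
  proof (rule ccontr)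
    assume "(\<Inter>n. A n) \<noteq> {}"
    then obtain x where "\<forall>n. x \<in> A n" by blast
    moreover obtain n where "norm x \<le> real n" using real_arch_simple by blast
    ultimately show False unfolding A_def by (metis mem_Collect_eq not_less)
  qed
  ultimately have "(\<lambda>n. measure M (A n)) \<longlonglongrightarrow> 0"
    using finite_Lim_measure_decseq[OF A_sets] by simp
  then obtain N where N: "\<forall>n\<ge>N. measure M (A n) < e"
    using \<open>e > 0\<close> by (auto dest!: order_tendstoD(2) simp: eventually_sequentially)
  have "measure M {x. R < norm x} < e" if "R \<ge> real N" for R
  proof -
    have "{x. R < norm x} \<subseteq> A N" unfolding A_def using that by auto
    then have "measure M {x. R < norm x} \<le> measure M (A N)"
      using A_sets by (intro finite_measure_mono) auto
    with N show ?thesis by force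
  qed
  then show ?thesis by blast
qed

lemma trig_polynomial_approximation_cube:
  fixes F :: "real^'n \<Rightarrow> real"
  assumes "r > 0" and F_cont: "continuous_on UNIV F" and F_bound: "\<And>x. \<bar>F x\<bar> \<le> B"
    and F_boundary: "\<And>x j. \<bar>x $ j\<bar> = r \<Longrightarrow> F x = 0" and "e > 0"
  obtains p where "trig_polynomial (\<lambda>x. complex_of_real (p x))" "continuous_on UNIV p"
    "\<And>x. \<bar>p x\<bar> \<le> B + e" "\<And>x. x \<in> cube r \<Longrightarrow> \<bar>F x - p x\<bar> < e"
proof -
  obtain g where g_cont: "continuous_on (torus_embed r ` cube r) g"
    and gF: "\<And>x. x \<in> cube r \<Longrightarrow> g (torus_embed r x) = F x"
    using continuous_factor_torus_embed[OF \<open>r > 0\<close> F_cont] F_boundary by blast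
  have "compact (torus_embed r ` cube r)"
    using compact_cube continuous_on_subset[OF continuous_on_torus_embed]
    by (blast intro: compact_continuous_image)
  then obtain q where q: "polynomial_function q"
    and q_approx: "\<And>y. y \<in> torus_embed r ` cube r \<Longrightarrow> norm (g y - q y) < e"
    using Stone_Weierstrass_polynomial_function[OF _ g_cont \<open>e > 0\<close>] by blast
  have approx: "\<bar>F x - q (torus_embed r x)\<bar> < e" if "x \<in> cube r" for x
    using q_approx[of "torus_embed r x"] gF[OF that] that by (simp add: image_eqI)
  show thesis
  proof
    show "trig_polynomial (\<lambda>x. complex_of_real (q (torus_embed r x)))"
      using q real_polynomial_function_eq trig_polynomial_torus_embed by blast
    show "continuous_on UNIV (\<lambda>x. q (torus_embed r x))"
      using continuous_on_polymonial_function[OF q] continuous_on_torus_embed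
      by (rule continuous_on_compose2) auto
    show "\<bar>q (torus_embed r x)\<bar> \<le> B + e" for x
    proof -
      obtain x' where "x' \<in> cube r" "torus_embed r x' = torus_embed r x"
        using torus_embed_periodic[OF \<open>r > 0\<close>] by blast
      then have "\<bar>F x' - q (torus_embed r x)\<bar> < e" using approx[of x'] by simp
      then show ?thesis using F_bound[of x'] by linarith
    qed
  qed (use approx in simp)
qed

lemma trig_polynomial_approximation:
  fixes f :: "real^'n \<Rightarrow> real"
  assumes f_cont: "continuous_on UNIV f" and f_bound: "\<And>x. \<bar>f x\<bar> \<le> B"
    and "e > 0" "R \<ge> 0"
  obtains p where "trig_polynomial (\<lambda>x. complex_of_real (p x))" "continuous_on UNIV p"
    "\<And>x. \<bar>p x\<bar> \<le> B + e" "\<And>x. norm x \<le> R \<Longrightarrow> \<bar>f x - p x\<bar> < e"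
proof -
  define r where "r = R + 2"
  define F where "F x = f x * max 0 (min 1 (R + 1 - norm x))" for x :: "real^'n"
  have "r > 0" using \<open>R \<ge> 0\<close> by (simp add: r_def)
  moreover have "continuous_on UNIV F" unfolding F_def by (intro continuous_intros f_cont)
  moreover have "\<bar>F x\<bar> \<le> B" for x
  proof -
    have "\<bar>F x\<bar> \<le> \<bar>f x\<bar> * 1"
      unfolding F_def abs_mult by (intro mult_left_mono) auto
    then show ?thesis using f_bound[of x] by simp
  qed
  moreover have "F x = 0" if "\<bar>x $ j\<bar> = r" for x j
    using component_le_norm_cart[of x j] that by (simp add: F_def r_def)
  ultimately obtain p where p: "trig_polynomial (\<lambda>x. complex_of_real (p x))" "continuous_on UNIV p"
    "\<And>x. \<bar>p x\<bar> \<le> B + e" and approx: "\<And>x. x \<in> cube r \<Longrightarrow> \<bar>F x - p x\<bar> < e"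
    using trig_polynomial_approximation_cube \<open>e > 0\<close> by metis
  have "\<bar>f x - p x\<bar> < e" if "norm x \<le> R" for x
  proof -
    have "\<bar>x $ j\<bar> \<le> r" for j
      using component_le_norm_cart[of x j] that unfolding r_def by linarith
    then have "x \<in> cube r" unfolding cube_def by blast
    moreover have "F x = f x" using that by (simp add: F_def)
    ultimately show ?thesis using approx by force
  qed
  with p that show thesis by blast
qed

lemma integrable_bounded_continuous:
  fixes h :: "'a::topological_space \<Rightarrow> real"
  assumes "prob_space M" "sets M = sets borel" "continuous_on UNIV h" "\<And>x. \<bar>h x\<bar> \<le> C"
  shows "integrable M h"
proof -
  interpret prob_space M by fact
  have "h \<in> borel_measurable M"
    using borel_measurable_continuous_onI[OF assms(3)] measurable_cong_sets[OF assms(2) refl] by blast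
  with assms(4) show ?thesis by (intro integrable_const_bound[where B=C]) auto
qed

lemma abs_integral_diff_le_indicator:
  assumes "prob_space M" "integrable M h1" "integrable M h2" "A \<in> sets M"
    and bound: "\<And>x. \<bar>h1 x - h2 x\<bar> \<le> a + b * indicator A x"
  shows "\<bar>(\<integral>x. h1 x \<partial>M) - (\<integral>x. h2 x \<partial>M)\<bar> \<le> a + b * measure M A"
proof -
  interpret prob_space M by fact
  have bound_integrable: "integrable M (\<lambda>x. a + b * indicator A x)"
    using \<open>A \<in> sets M\<close> by (intro Bochner_Integration.integrable_add integrable_mult_right integrable_real_indicator)
      (auto simp: less_top[symmetric])
  have "\<bar>(\<integral>x. h1 x \<partial>M) - (\<integral>x. h2 x \<partial>M)\<bar> = \<bar>\<integral>x. h1 x - h2 x \<partial>M\<bar>"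
    using assms(2,3) by simp
  also have "\<dots> \<le> (\<integral>x. \<bar>h1 x - h2 x\<bar> \<partial>M)"
    using integral_norm_bound[of M "\<lambda>x. h1 x - h2 x"] by simp
  also have "\<dots> \<le> (\<integral>x. a + b * indicator A x \<partial>M)"
    using assms(2,3) bound_integrable bound by (intro integral_mono) auto
  also have "\<dots> = a + b * measure M A"
    using \<open>A \<in> sets M\<close>
    by (subst Bochner_Integration.integral_add)
      (auto simp: prob_space less_top[symmetric] intro!: integrable_real_indicator)
  finally show ?thesis .
qed

lemma abs_integral_diff_le_tail:
  fixes f p :: "'a::real_normed_vector \<Rightarrow> real"
  assumes "prob_space M" "sets M = sets borel" "continuous_on UNIV f" "continuous_on UNIV p"
    and f_bound: "\<And>x. \<bar>f x\<bar> \<le> B" and p_bound: "\<And>x. \<bar>p x\<bar> \<le> B + e"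
    and p_approx: "\<And>x. norm x \<le> R \<Longrightarrow> \<bar>f x - p x\<bar> < e" and "e > 0"
  shows "\<bar>(\<integral>x. f x \<partial>M) - (\<integral>x. p x \<partial>M)\<bar> \<le> e + (2 * B + e) * measure M {x. R < norm x}"
proof (rule abs_integral_diff_le_indicator)
  show "\<bar>f x - p x\<bar> \<le> e + (2 * B + e) * indicator {x. R < norm x} x" for x
    using p_approx[of x] f_bound[of x] p_bound[of x] \<open>e > 0\<close> by (auto simp: indicator_def)
qed (use assms(1-4) f_bound p_bound in \<open>auto intro: integrable_bounded_continuous\<close>)

lemma integral_bounded_continuous_eq:
  fixes \<mu> \<nu> :: "(real^'n) measure" and f :: "real^'n \<Rightarrow> real"
  assumes \<mu>: "prob_space \<mu>" "sets \<mu> = sets borel" and \<nu>: "prob_space \<nu>" "sets \<nu> = sets borel"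
    and char_eq: "\<And>s. (\<integral>x. cis (s \<bullet> x) \<partial>\<mu>) = (\<integral>x. cis (s \<bullet> x) \<partial>\<nu>)"
    and f_cont: "continuous_on UNIV f" and f_bound: "\<And>x. \<bar>f x\<bar> \<le> B"
  shows "(\<integral>x. f x \<partial>\<mu>) = (\<integral>x. f x \<partial>\<nu>)"
proof -
  have "B \<ge> 0" using f_bound[of 0] by linarith
  have close: "\<bar>(\<integral>x. f x \<partial>\<mu>) - (\<integral>x. f x \<partial>\<nu>)\<bar> \<le> 2 * (e + (2 * B + e) * e)" if "e > 0" for e
  proof -
    obtain R1 R2 where R1: "\<forall>R\<ge>R1. measure \<mu> {x. R < norm x} < e"
      and R2: "\<forall>R\<ge>R2. measure \<nu> {x. R < norm x} < e"
      using tail_measure_small[OF \<mu> \<open>e > 0\<close>] tail_measure_small[OF \<nu> \<open>e > 0\<close>] by blast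
    define R where "R = max (max R1 R2) 0"
    have "R \<ge> R1" "R \<ge> R2" "R \<ge> 0" unfolding R_def by auto
    with R1 R2 have tails: "measure \<mu> {x. R < norm x} < e" "measure \<nu> {x. R < norm x} < e" by blast+
    obtain p where p_trig: "trig_polynomial (\<lambda>x. complex_of_real (p x))" and p_cont: "continuous_on UNIV p"
      and p_bound: "\<And>x. \<bar>p x\<bar> \<le> B + e" and p_approx: "\<And>x. norm x \<le> R \<Longrightarrow> \<bar>f x - p x\<bar> < e"
      using trig_polynomial_approximation[OF f_cont f_bound \<open>e > 0\<close> \<open>R \<ge> 0\<close>] by blast
    have "(\<integral>x. complex_of_real (p x) \<partial>\<mu>) = (\<integral>x. complex_of_real (p x) \<partial>\<nu>)"
      using integral_trig_polynomial_eq[OF \<mu> \<nu> char_eq p_trig] .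
    then have p_eq: "(\<integral>x. p x \<partial>\<mu>) = (\<integral>x. p x \<partial>\<nu>)" by simp
    have approx: "\<bar>(\<integral>x. f x \<partial>M) - (\<integral>x. p x \<partial>M)\<bar> \<le> e + (2 * B + e) * e"
      if "prob_space M" "sets M = sets borel" "measure M {x. R < norm x} < e" for M
    proof -
      have "\<bar>(\<integral>x. f x \<partial>M) - (\<integral>x. p x \<partial>M)\<bar> \<le> e + (2 * B + e) * measure M {x. R < norm x}"
        using abs_integral_diff_le_tail[OF that(1,2) f_cont p_cont f_bound p_bound p_approx \<open>e > 0\<close>] .
      also have "\<dots> \<le> e + (2 * B + e) * e"
        using that(3) \<open>B \<ge> 0\<close> \<open>e > 0\<close> by (intro add_left_mono mult_left_mono) auto
      finally show ?thesis .
    qed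
    show ?thesis
      using approx[OF \<mu> tails(1)] approx[OF \<nu> tails(2)] p_eq by (smt (verit))
  qed
  have "((\<lambda>e. 2 * (e + (2 * B + e) * e)) \<longlongrightarrow> 2 * (0 + (2 * B + 0) * 0)) (at_right 0)"
    by (intro tendsto_intros)
  moreover have "\<forall>\<^sub>F e in at_right 0. \<bar>(\<integral>x. f x \<partial>\<mu>) - (\<integral>x. f x \<partial>\<nu>)\<bar> \<le> 2 * (e + (2 * B + e) * e)"
    using eventually_at_right_less by (rule eventually_mono) (rule close)
  ultimately have "\<bar>(\<integral>x. f x \<partial>\<mu>) - (\<integral>x. f x \<partial>\<nu>)\<bar> \<le> 0"
    by (intro tendsto_lowerbound) auto
  then show ?thesis by simp
qed

lemma integral_infdist_cutoff_tendsto_measure: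
  fixes M :: "(real^'n) measure"
  assumes "prob_space M" "sets M = sets borel" "closed X" "X \<noteq> {}"
  shows "(\<lambda>k. \<integral>x. max 0 (1 - (real k + 1) * infdist x X) \<partial>M) \<longlonglongrightarrow> measure M X"
proof -
  interpret prob_space M by fact
  have "X \<in> sets M" using assms(2,3) by auto
  have pointwise: "(\<lambda>k. max 0 (1 - (real k + 1) * infdist x X)) \<longlonglongrightarrow> indicator X x" for x
  proof (cases "x \<in> X")
    case True
    then show ?thesis using in_closed_iff_infdist_zero[OF assms(3,4)] by simp
  next
    case False
    then have "infdist x X > 0" using infdist_pos_not_in_closed[OF assms(3,4)] by blast
    then obtain N :: nat where "1 < real N * infdist x X"
      using reals_Archimedean3 by blast
    moreover have "real N * infdist x X \<le> (real k + 1) * infdist x X" if "k \<ge> N" for k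
      using that \<open>infdist x X > 0\<close> by (intro mult_right_mono) auto
    ultimately have "max 0 (1 - (real k + 1) * infdist x X) = 0" if "k \<ge> N" for k
      using that by fastforce
    then have "\<forall>\<^sub>F k in sequentially. max 0 (1 - (real k + 1) * infdist x X) = 0"
      unfolding eventually_sequentially by blast
    then show ?thesis using False by (simp add: tendsto_eventually)
  qed
  have "(\<lambda>k. \<integral>x. max 0 (1 - (real k + 1) * infdist x X) \<partial>M) \<longlonglongrightarrow> (\<integral>x. indicator X x \<partial>M)"
  proof (rule integral_dominated_convergence[where w="\<lambda>_. 1"])
    show "(\<lambda>x. max 0 (1 - (real k + 1) * infdist x X)) \<in> borel_measurable M" for k
      unfolding measurable_cong_sets[OF assms(2) refl]
      by (intro borel_measurable_continuous_onI continuous_intros)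
    show "AE x in M. norm (max 0 (1 - (real k + 1) * infdist x X)) \<le> 1" for k
      by (simp add: infdist_nonneg)
  qed (use \<open>X \<in> sets M\<close> pointwise in auto)
  then show ?thesis using \<open>X \<in> sets M\<close> by simp
qed

theorem Levy_uniqueness_vec:
  fixes \<mu> \<nu> :: "(real^'n) measure"
  assumes \<mu>: "prob_space \<mu>" "sets \<mu> = sets borel" and \<nu>: "prob_space \<nu>" "sets \<nu> = sets borel"
    and char_eq: "\<And>s. (\<integral>x. cis (s \<bullet> x) \<partial>\<mu>) = (\<integral>x. cis (s \<bullet> x) \<partial>\<nu>)"
  shows "\<mu> = \<nu>"
proof (rule measure_eqI_generator_eq[where \<Omega>=UNIV and E="Collect closed" and A="\<lambda>_. UNIV"])
  have "sets borel = sigma_sets (UNIV :: (real^'n) set) (Collect closed)"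
    by (subst borel_eq_closed) (simp add: sets_measure_of)
  then show "sets \<mu> = sigma_sets UNIV (Collect closed)" "sets \<nu> = sigma_sets UNIV (Collect closed)"
    using \<mu>(2) \<nu>(2) by simp_all
  show "emeasure \<mu> UNIV \<noteq> \<infinity>"
    using prob_space.emeasure_space_1[OF \<mu>(1)] sets_eq_imp_space_eq[OF \<mu>(2)] by simp
next
  fix X :: "(real^'n) set"
  assume "X \<in> Collect closed"
  show "emeasure \<mu> X = emeasure \<nu> X"
  proof (cases "X = {}")
    case False
    interpret \<mu>: prob_space \<mu> by fact
    interpret \<nu>: prob_space \<nu> by fact
    have "(\<integral>x. max 0 (1 - (real k + 1) * infdist x X) \<partial>\<mu>) = (\<integral>x. max 0 (1 - (real k + 1) * infdist x X) \<partial>\<nu>)" for k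
      by (rule integral_bounded_continuous_eq[OF \<mu> \<nu> char_eq, where B=1])
        (auto intro!: continuous_intros simp: infdist_nonneg)
    then have "measure \<mu> X = measure \<nu> X"
      using integral_infdist_cutoff_tendsto_measure[OF \<mu> _ False] integral_infdist_cutoff_tendsto_measure[OF \<nu> _ False]
        \<open>X \<in> Collect closed\<close> LIMSEQ_unique by fastforce
    then show ?thesis by (simp add: \<mu>.emeasure_eq_measure \<nu>.emeasure_eq_measure)
  qed simp
qed (auto simp: Int_stable_def)

section \<open>Orthonormal eigenbases\<close>

definition spectral_matrix :: "('n \<Rightarrow> real^'n) \<Rightarrow> ('n \<Rightarrow> real) \<Rightarrow> real^'n^'n" where
  "spectral_matrix u f = (\<Sum>i\<in>UNIV. f i *\<^sub>R outer (u i))"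

lemma outer_mult_vec: "outer v *v x = (v \<bullet> x) *\<^sub>R v"
  by (simp add: vec_eq_iff outer_def matrix_vector_mult_def inner_vec_def sum_distrib_left mult_ac)

lemma sum_matrix_vector_mult: "(\<Sum>i\<in>I. A i) *v x = (\<Sum>i\<in>I. A i *v x)"
  by (induction I rule: infinite_finite_induct) (simp_all add: matrix_vector_mult_add_rdistrib)

lemma spectral_matrix_mult_vec: "spectral_matrix u f *v x = (\<Sum>i\<in>UNIV. (f i * (u i \<bullet> x)) *\<^sub>R u i)"
  by (simp add: spectral_matrix_def sum_matrix_vector_mult scaleR_matrix_vector_assoc[symmetric]
      outer_mult_vec)

lemma transpose_spectral_matrix: "transpose (spectral_matrix u f) = spectral_matrix u f"
  by (simp add: vec_eq_iff spectral_matrix_def transpose_def outer_def sum_component mult.commute)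

definition cinner :: "real^'n \<Rightarrow> complex^'n \<Rightarrow> complex" where
  "cinner v w = (\<Sum>a\<in>UNIV. complex_of_real (v $ a) * w $ a)"

lemma cinner_add_right: "cinner v (w + w') = cinner v w + cinner v w'"
  by (simp add: cinner_def distrib_left sum.distrib)

lemma cinner_scale_right: "cinner v (c *s w) = c * cinner v w"
  by (simp add: cinner_def sum_distrib_left mult_ac)

lemma cinner_zero_right: "cinner v 0 = 0"
  by (simp add: cinner_def)

lemma cinner_sum_right: "cinner v (\<Sum>i\<in>I. w i) = (\<Sum>i\<in>I. cinner v (w i))"
  by (induction I rule: infinite_finite_induct) (simp_all add: cinner_zero_right cinner_add_right)

lemma cinner_scaleR_left: "cinner (a *\<^sub>R v) w = complex_of_real a * cinner v w"
  by (simp add: cinner_def sum_distrib_left mult_ac)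

lemma cinner_cvec: "cinner v (cvec x) = complex_of_real (v \<bullet> x)"
  by (simp add: cinner_def cvec_def inner_vec_def)

lemma inner_re_vec: "v \<bullet> re_vec w = Re (cinner v w)"
  by (simp add: cinner_def re_vec_def inner_vec_def Re_sum)

lemma cinner_cmat_mult: "cinner v (cmat A *v w) = cinner (transpose A *v v) w"
proof -
  have "cinner v (cmat A *v w) = (\<Sum>a\<in>UNIV. \<Sum>b\<in>UNIV. complex_of_real (v $ a * A $ a $ b) * w $ b)"
    by (simp add: cinner_def matrix_vector_mult_def cmat_def sum_distrib_left mult_ac)
  also have "\<dots> = (\<Sum>b\<in>UNIV. complex_of_real (\<Sum>a\<in>UNIV. v $ a * A $ a $ b) * w $ b)"
    by (subst sum.swap) (simp add: sum_distrib_right)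
  also have "\<dots> = cinner (transpose A *v v) w"
    by (simp add: cinner_def matrix_vector_mult_def transpose_def mult.commute)
  finally show ?thesis .
qed

lemma cmat_mult_cvec: "cmat A *v cvec x = cvec (A *v x)"
  by (simp add: vec_eq_iff cmat_def cvec_def matrix_vector_mult_def)

lemma cvec_scaleR: "cvec (a *\<^sub>R x) = complex_of_real a *s cvec x"
  by (simp add: vec_eq_iff cvec_def)

lemma sum_spectral_matrix: "(\<Sum>k\<in>I. spectral_matrix u (f k)) = spectral_matrix u (\<lambda>i. \<Sum>k\<in>I. f k i)"
  unfolding spectral_matrix_def scaleR_sum_left by (rule sum.swap)

locale orthonormal_frame =
  fixes u :: "'n::finite \<Rightarrow> real^'n"
  assumes orthonormal: "u i \<bullet> u j = (if i = j then 1 else 0)"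
begin

lemma inner_frame_sum: "u j \<bullet> (\<Sum>i\<in>UNIV. c i *\<^sub>R u i) = c j"
  by (simp add: inner_sum_right orthonormal if_distrib cong: if_cong)

lemma frame_eqI:
  assumes "\<And>i. u i \<bullet> x = u i \<bullet> y"
  shows "x = y"
proof -
  define U :: "real^'n^'n" where "U = (\<chi> i. u i)"
  have "orthogonal_matrix U"
    unfolding orthogonal_matrix_orthonormal_rows
    using orthonormal by (simp add: U_def row_def norm_eq_1 orthogonal_def)
  then have "transpose U ** U = mat 1" by (simp add: orthogonal_matrix_def)
  moreover have "U *v x = U *v y"
    using assms by (simp add: vec_eq_iff U_def matrix_vector_mult_def inner_vec_def)
  ultimately show "x = y" by (metis matrix_vector_mul_assoc matrix_vector_mul_lid)
qed

lemma frame_expansion: "x = (\<Sum>i\<in>UNIV. (u i \<bullet> x) *\<^sub>R u i)"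
  by (rule frame_eqI) (simp add: inner_frame_sum)

lemma inner_spectral_matrix: "u i \<bullet> (spectral_matrix u f *v x) = f i * (u i \<bullet> x)"
  by (simp add: spectral_matrix_mult_vec inner_frame_sum)

lemma spectral_matrix_mult:
  "spectral_matrix u f ** spectral_matrix u g = spectral_matrix u (\<lambda>i. f i * g i)"
  unfolding matrix_eq
  by (auto intro: frame_eqI simp: matrix_vector_mul_assoc[symmetric] inner_spectral_matrix)

lemma spectral_decomposition:
  assumes "\<And>i. A *v u i = \<mu> i *\<^sub>R u i"
  shows "A = spectral_matrix u \<mu>"
  unfolding matrix_eq
proof
  fix x
  have "A *v x = (\<Sum>i\<in>UNIV. (u i \<bullet> x) *\<^sub>R (A *v u i))"
    by (subst frame_expansion)
      (simp add: linear_sum[OF matrix_vector_mul_linear] matrix_vector_mult_scaleR)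
  then show "A *v x = spectral_matrix u \<mu> *v x"
    by (simp add: assms spectral_matrix_mult_vec mult.commute)
qed

lemma cinner_frame_eq_zero:
  assumes "\<And>j. cinner (u j) w = 0"
  shows "w = 0"
proof -
  have "re_vec w = 0"
    by (rule frame_eqI) (simp add: inner_re_vec assms)
  moreover have "(\<chi> a. Im (w $ a)) = 0"
  proof (rule frame_eqI)
    fix j
    have "Im (cinner (u j) w) = 0" using assms by simp
    then show "u j \<bullet> (\<chi> a. Im (w $ a)) = u j \<bullet> 0"
      by (simp add: cinner_def inner_vec_def Im_sum)
  qed
  ultimately show ?thesis by (simp add: vec_eq_iff re_vec_def complex_eq_iff)
qed

end

locale orthonormal_eigenbasis = orthonormal_frame u for u :: "'n::finite \<Rightarrow> real^'n" +
  fixes A :: "real^'n^'n" and mu :: "'n \<Rightarrow> real"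
  assumes eigenvector: "A *v u i = mu i *\<^sub>R u i"
begin

lemma symmetric: "transpose A = A"
  using spectral_decomposition[OF eigenvector] transpose_spectral_matrix by metis

lemma cinner_eigenvector: "cinner (u i) (cmat A *v w) = complex_of_real (mu i) * cinner (u i) w"
  by (simp add: cinner_cmat_mult symmetric eigenvector cinner_scaleR_left)

lemma abs_eigenvalue_le_spectral_radius: "\<bar>mu i\<bar> \<le> spectral_radius A"
proof -
  define S where "S = {cmod ev | ev. \<exists>v::complex^'n. v \<noteq> 0 \<and> cmat A *v v = ev *s v}"
  have "u i \<noteq> 0" using orthonormal[of i i] by auto
  then have "cvec (u i) \<noteq> 0" by (auto simp: vec_eq_iff cvec_def)
  moreover have "cmat A *v cvec (u i) = complex_of_real (mu i) *s cvec (u i)"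
    by (simp add: cmat_mult_cvec eigenvector cvec_scaleR)
  ultimately have in_S: "\<bar>mu i\<bar> \<in> S" unfolding S_def by force
  have S_eigenvalues: "S \<subseteq> range (\<lambda>j. \<bar>mu j\<bar>)"
  proof
    fix x assume "x \<in> S"
    then obtain ev v where x: "x = cmod ev" and "v \<noteq> 0" and ev: "cmat A *v v = ev *s v"
      unfolding S_def by blast
    then obtain j where j: "cinner (u j) v \<noteq> 0" using cinner_frame_eq_zero by blast
    have "complex_of_real (mu j) * cinner (u j) v = cinner (u j) (cmat A *v v)"
      by (simp add: cinner_eigenvector)
    also have "\<dots> = ev * cinner (u j) v"
      by (simp add: ev cinner_scale_right)
    finally have "ev = complex_of_real (mu j)" using j by simp
    with x show "x \<in> range (\<lambda>j. \<bar>mu j\<bar>)" by simp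
  qed
  have "finite S" using finite_subset[OF S_eigenvalues] by simp
  with in_S have "\<bar>mu i\<bar> \<le> Max S" by simp
  then show ?thesis unfolding spectral_radius_def S_def .
qed

lemma cmod_mult_eigenvalue_less_one:
  fixes psi :: "'b \<Rightarrow> complex"
  assumes "finite L" "l \<in> L" "(MAX l\<in>L. cmod (psi l)) * spectral_radius A < 1"
  shows "cmod (psi l) * \<bar>mu i\<bar> < 1"
proof -
  have max: "cmod (psi l) \<le> (MAX l\<in>L. cmod (psi l))" using assms(1,2) by (intro Max_ge) auto
  moreover have "0 \<le> (MAX l\<in>L. cmod (psi l))" using order_trans[OF norm_ge_zero max] .
  ultimately have "cmod (psi l) * \<bar>mu i\<bar> \<le> (MAX l\<in>L. cmod (psi l)) * spectral_radius A"
    using abs_eigenvalue_le_spectral_radius[of i] by (intro mult_mono) auto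
  with assms(3) show ?thesis by linarith
qed

end

section \<open>The ARMA filter in the spectral domain\<close>

definition arma_impulse :: "nat \<Rightarrow> real \<Rightarrow> (nat \<Rightarrow> complex) \<Rightarrow> (nat \<Rightarrow> complex) \<Rightarrow> nat \<Rightarrow> complex" where
  "arma_impulse K c psi phi k = (\<Sum>l\<in>{1..K}. phi l * psi l ^ k) + (if k = 0 then complex_of_real c else 0)"

lemma cinner_arma_branch:
  assumes left_eigen: "\<And>w. cinner v (A *v w) = lam * cinner v w"
  shows "cinner v (arma_branch ps ph A y t) = (\<Sum>k\<le>t. ph * (ps * lam) ^ k * cinner v (y (t - k)))"
proof (induction t)
  case 0
  then show ?case by (simp add: cinner_add_right cinner_scale_right left_eigen cinner_zero_right)
next
  case (Suc t)
  have "cinner v (arma_branch ps ph A y (Suc t)) =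
        ps * lam * cinner v (arma_branch ps ph A y t) + ph * cinner v (y (Suc t))"
    by (simp add: cinner_add_right cinner_scale_right left_eigen)
  also have "\<dots> = (\<Sum>k\<le>t. ph * (ps * lam) ^ Suc k * cinner v (y (t - k))) + ph * cinner v (y (Suc t))"
    unfolding Suc.IH by (simp add: sum_distrib_left mult_ac)
  also have "\<dots> = (\<Sum>k\<le>Suc t. ph * (ps * lam) ^ k * cinner v (y (Suc t - k)))"
    by (subst sum.atMost_Suc_shift) simp
  finally show ?case .
qed

lemma cinner_arma_output:
  assumes "\<And>w. cinner v (A *v w) = lam * cinner v w"
  shows "cinner v (arma_output K c psi phi A y t) =
    (\<Sum>k\<le>t. arma_impulse K c psi phi k * lam ^ k * cinner v (y (t - k)))"
proof -
  have "(\<Sum>l\<in>{1..K}. \<Sum>k\<le>t. phi l * (psi l * lam) ^ k * cinner v (y (t - k))) =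
      (\<Sum>k\<le>t. (\<Sum>l\<in>{1..K}. phi l * psi l ^ k) * lam ^ k * cinner v (y (t - k)))"
    by (subst sum.swap) (simp add: sum_distrib_left sum_distrib_right power_mult_distrib mult_ac)
  moreover have "complex_of_real c * cinner v (y t) =
      (\<Sum>k\<le>t. (if k = 0 then complex_of_real c else 0) * lam ^ k * cinner v (y (t - k)))"
    by (subst sum.atMost_shift) simp
  ultimately show ?thesis
    by (simp add: arma_output_def arma_impulse_def cinner_add_right cinner_scale_right
        cinner_sum_right cinner_arma_branch[OF assms] distrib_right sum.distrib)
qed

context orthonormal_eigenbasis
begin

lemma re_arma_output_eq:
  "re_vec (arma_output K c psi phi (cmat A) (\<lambda>t. cvec (x t)) t) =
    (\<Sum>k\<le>t. spectral_matrix u (\<lambda>i. Re (arma_impulse K c psi phi k) * mu i ^ k) *v x (t - k))"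
proof (rule frame_eqI)
  fix i
  have "cinner (u i) (arma_output K c psi phi (cmat A) (\<lambda>t. cvec (x t)) t) =
      (\<Sum>k\<le>t. arma_impulse K c psi phi k * complex_of_real (mu i ^ k * (u i \<bullet> x (t - k))))"
    by (simp add: cinner_arma_output[OF cinner_eigenvector] cinner_cvec mult.assoc)
  then show "u i \<bullet> re_vec (arma_output K c psi phi (cmat A) (\<lambda>t. cvec (x t)) t) =
      u i \<bullet> (\<Sum>k\<le>t. spectral_matrix u (\<lambda>i. Re (arma_impulse K c psi phi k) * mu i ^ k) *v x (t - k))"
    by (simp add: inner_re_vec Re_sum inner_sum_right inner_spectral_matrix mult.assoc)
qed

end

text \<open>\<open>arma_response\<close> is the frequency response \<open>h\<close> of the theorem, and its \<open>\<kappa>\<close> is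
  \<open>\<sigma>\<^sup>2\<close> times \<open>arma_energy\<close>.\<close>

definition arma_response :: "nat \<Rightarrow> real \<Rightarrow> (nat \<Rightarrow> complex) \<Rightarrow> (nat \<Rightarrow> complex) \<Rightarrow> real \<Rightarrow> complex" where
  "arma_response K c psi phi x = complex_of_real c + (\<Sum>l\<in>{1..K}. phi l / (1 - psi l * complex_of_real x))"

definition arma_energy :: "nat \<Rightarrow> real \<Rightarrow> (nat \<Rightarrow> complex) \<Rightarrow> (nat \<Rightarrow> complex) \<Rightarrow> real \<Rightarrow> complex" where
  "arma_energy K c psi phi x =
    (\<Sum>l\<in>{1..K}. \<Sum>l'\<in>{1..K}. phi l * cnj (phi l') / (1 - psi l * cnj (psi l') * complex_of_real (x\<^sup>2)))
    + complex_of_real c * (complex_of_real c + 2 * (\<Sum>l\<in>{1..K}. phi l))"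

lemma scaled_arma_energy_eq:
  "(\<Sum>l\<in>{1..K}. \<Sum>l'\<in>{1..K}.
      complex_of_real s * phi l * cnj (phi l') / (1 - psi l * cnj (psi l') * complex_of_real (x\<^sup>2)))
    + complex_of_real (c * s) * (complex_of_real c + 2 * (\<Sum>l\<in>{1..K}. phi l))
  = complex_of_real s * arma_energy K c psi phi x"
  by (simp add: arma_energy_def distrib_left sum_distrib_left mult_ac)

lemma arma_impulse_sums:
  assumes stable: "\<And>l. l \<in> {1..K} \<Longrightarrow> cmod (psi l) * \<bar>x\<bar> < 1"
  shows "(\<lambda>k. Re (arma_impulse K c psi phi k) * x ^ k) sums Re (arma_response K c psi phi x)"
proof -
  have "(\<lambda>k. phi l * (psi l * complex_of_real x) ^ k) sums (phi l / (1 - psi l * complex_of_real x))"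
    if "l \<in> {1..K}" for l
    using sums_mult[OF geometric_sums, of "psi l * complex_of_real x" "phi l"] stable[OF that]
    by (simp add: norm_mult divide_inverse)
  then have "(\<lambda>k. (\<Sum>l\<in>{1..K}. phi l * (psi l * complex_of_real x) ^ k)
      + (if k = 0 then complex_of_real c else 0)) sums arma_response K c psi phi x"
    unfolding arma_response_def add.commute[of "complex_of_real c"]
    by (intro sums_add sums_sum sums_single[where i=0 and f="\<lambda>_. complex_of_real c", simplified])
  moreover have "arma_impulse K c psi phi k * complex_of_real x ^ k =
      (\<Sum>l\<in>{1..K}. phi l * (psi l * complex_of_real x) ^ k) + (if k = 0 then complex_of_real c else 0)" for k
    by (cases "k = 0") (simp_all add: arma_impulse_def sum_distrib_right power_mult_distrib mult.assoc)
  ultimately have "(\<lambda>k. arma_impulse K c psi phi k * complex_of_real x ^ k) sums arma_response K c psi phi x"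
    by simp
  from sums_Re[OF this] show ?thesis by simp
qed

lemma arma_cross_sums:
  fixes psi phi :: "nat \<Rightarrow> complex"
  assumes stable: "\<And>l. l \<in> {1..K} \<Longrightarrow> cmod (psi l) * \<bar>x\<bar> < 1"
  defines "a k \<equiv> \<Sum>l\<in>{1..K}. phi l * psi l ^ k"
  shows "(\<lambda>k. a k * cnj (a k) * complex_of_real (x\<^sup>2) ^ k)
    sums (\<Sum>l\<in>{1..K}. \<Sum>l'\<in>{1..K}. phi l * cnj (phi l') / (1 - psi l * cnj (psi l') * complex_of_real (x\<^sup>2)))"
proof -
  have "(\<lambda>k. phi l * cnj (phi l') * (psi l * cnj (psi l') * complex_of_real (x\<^sup>2)) ^ k)
      sums (phi l * cnj (phi l') / (1 - psi l * cnj (psi l') * complex_of_real (x\<^sup>2)))"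
    if "l \<in> {1..K}" "l' \<in> {1..K}" for l l'
  proof -
    have "cmod (psi l * cnj (psi l') * complex_of_real (x\<^sup>2)) = (cmod (psi l) * \<bar>x\<bar>) * (cmod (psi l') * \<bar>x\<bar>)"
      by (simp add: norm_mult power2_eq_square)
    also have "\<dots> < 1"
      using stable[OF that(1)] stable[OF that(2)]
        mult_strict_mono[of "cmod (psi l) * \<bar>x\<bar>" 1 "cmod (psi l') * \<bar>x\<bar>" 1]
      by simp
    finally show ?thesis
      using sums_mult[OF geometric_sums] by (simp add: divide_inverse)
  qed
  then have "(\<lambda>k. \<Sum>l\<in>{1..K}. \<Sum>l'\<in>{1..K}.
        phi l * cnj (phi l') * (psi l * cnj (psi l') * complex_of_real (x\<^sup>2)) ^ k)
      sums (\<Sum>l\<in>{1..K}. \<Sum>l'\<in>{1..K}.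
        phi l * cnj (phi l') / (1 - psi l * cnj (psi l') * complex_of_real (x\<^sup>2)))"
    by (intro sums_sum)
  moreover have "a k * cnj (a k) * complex_of_real (x\<^sup>2) ^ k =
      (\<Sum>l\<in>{1..K}. \<Sum>l'\<in>{1..K}. phi l * cnj (phi l') * (psi l * cnj (psi l') * complex_of_real (x\<^sup>2)) ^ k)" for k
    by (simp add: a_def sum_distrib_left sum_distrib_right power_mult_distrib mult_ac) (rule sum.swap)
  ultimately show ?thesis by simp
qed

lemma arma_impulse_energy_sums:
  assumes real: "\<And>k. (\<Sum>l\<in>{1..K}. phi l * psi l ^ k) \<in> \<real>"
    and stable: "\<And>l. l \<in> {1..K} \<Longrightarrow> cmod (psi l) * \<bar>x\<bar> < 1"
  shows "(\<lambda>k. (Re (arma_impulse K c psi phi k) * x ^ k)\<^sup>2) sums Re (arma_energy K c psi phi x)"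
proof -
  define a where "a k = (\<Sum>l\<in>{1..K}. phi l * psi l ^ k)" for k
  have "(\<lambda>k. a k * cnj (a k) * complex_of_real (x\<^sup>2) ^ k
        + (if k = 0 then complex_of_real c * (complex_of_real c + 2 * a 0) else 0))
      sums arma_energy K c psi phi x"
    unfolding arma_energy_def
    using arma_cross_sums[OF stable] sums_single[of 0 "\<lambda>_. complex_of_real c * (complex_of_real c + 2 * a 0)"]
    by (simp add: a_def sums_add)
  from sums_Re[OF this] have "(\<lambda>k. Re (a k * cnj (a k) * complex_of_real (x\<^sup>2) ^ k
        + (if k = 0 then complex_of_real c * (complex_of_real c + 2 * a 0) else 0)))
      sums Re (arma_energy K c psi phi x)" .
  moreover have "Re (a k * cnj (a k) * complex_of_real (x\<^sup>2) ^ k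
        + (if k = 0 then complex_of_real c * (complex_of_real c + 2 * a 0) else 0))
      = (Re (arma_impulse K c psi phi k) * x ^ k)\<^sup>2" for k
  proof -
    obtain r where "a k = complex_of_real r" using real[of k] unfolding a_def by (auto elim: Reals_cases)
    moreover obtain r0 where "a 0 = complex_of_real r0" using real[of 0] unfolding a_def by (auto elim: Reals_cases)
    moreover have "arma_impulse K c psi phi k = a k + (if k = 0 then complex_of_real c else 0)"
      by (simp add: arma_impulse_def a_def)
    ultimately show ?thesis
      by (cases "k = 0") (simp_all add: power2_eq_square power_mult_distrib algebra_simps)
  qed
  ultimately show ?thesis by simp
qed

section \<open>Gaussian white noise\<close>

lemma gaussian_vec_unique: "gaussian_vec m Q N1 \<Longrightarrow> gaussian_vec m Q N2 \<Longrightarrow> N1 = N2"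
  unfolding gaussian_vec_def by (intro Levy_uniqueness_vec) auto

lemma converges_in_distribution_pointwise:
  fixes X :: "nat \<Rightarrow> 'a \<Rightarrow> 'b::topological_space"
  assumes "prob_space M" "\<And>t. X t \<in> borel_measurable M" "Y \<in> borel_measurable M"
    and pointwise: "\<And>\<omega>. (\<lambda>t. X t \<omega>) \<longlonglongrightarrow> Y \<omega>"
  shows "converges_in_distribution (\<lambda>t. distr M borel (X t)) (distr M borel Y)"
  unfolding converges_in_distribution_def
proof (intro allI impI)
  interpret prob_space M by fact
  fix f :: "'b \<Rightarrow> real"
  assume "continuous_on UNIV f \<and> bounded (range f)"
  then obtain B where f_cont: "continuous_on UNIV f" and f_bound: "\<And>x. norm (f x) \<le> B"
    by (auto simp: bounded_iff)
  have f_meas: "f \<in> borel_measurable borel" using f_cont by (rule borel_measurable_continuous_onI)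
  have "(\<lambda>t. \<integral>\<omega>. f (X t \<omega>) \<partial>M) \<longlonglongrightarrow> (\<integral>\<omega>. f (Y \<omega>) \<partial>M)"
  proof (rule integral_dominated_convergence[where w="\<lambda>_. B"])
    show "AE \<omega> in M. (\<lambda>t. f (X t \<omega>)) \<longlonglongrightarrow> f (Y \<omega>)"
      using continuous_on_tendsto_compose[OF f_cont pointwise] by simp
  qed (use f_bound f_meas assms(2,3) in auto)
  then show "(\<lambda>t. \<integral>x. f x \<partial>distr M borel (X t)) \<longlonglongrightarrow> (\<integral>x. f x \<partial>distr M borel Y)"
    using assms(2,3) f_meas by (simp add: integral_distr)
qed

lemma borel_measurable_matrix_vector_mult [measurable]:
  "(\<lambda>x. B *v x) \<in> borel_measurable (borel :: (real^'n) measure)"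
  by (intro borel_measurable_continuous_onI continuous_intros)

lemma inner_matrix_vector_mult: "s \<bullet> (B *v x) = (transpose B *v s) \<bullet> (x :: real^'n)"
  by (simp add: dot_lmul_matrix)

lemma cis_sum: "cis (\<Sum>j\<in>J. f j) = (\<Prod>j\<in>J. cis (f j))"
  by (induction J rule: infinite_finite_induct) (simp_all add: cis_mult[symmetric])

locale gaussian_white_noise = prob_space M for M :: "'a measure" +
  fixes e :: "nat \<Rightarrow> 'a \<Rightarrow> real^'n" and sigma :: real
  assumes noise_measurable [measurable]: "e t \<in> borel_measurable M"
    and noise_indep: "indep_vars (\<lambda>_. borel) e UNIV"
    and noise_gaussian: "gaussian_vec 0 (sigma\<^sup>2 *\<^sub>R mat 1) (distr M borel (e t))"
begin

lemma char_noise: "(\<integral>\<omega>. cis (w \<bullet> e t \<omega>) \<partial>M) = complex_of_real (exp (- (sigma\<^sup>2 * (w \<bullet> w)) / 2))"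
proof -
  have "(\<integral>\<omega>. cis (w \<bullet> e t \<omega>) \<partial>M) = (\<integral>x. cis (w \<bullet> x) \<partial>distr M borel (e t))"
    by (rule integral_distr[symmetric]) (auto intro!: borel_measurable_continuous_onI continuous_intros)
  also have "\<dots> = complex_of_real (exp (- (w \<bullet> ((sigma\<^sup>2 *\<^sub>R mat 1) *v w)) / 2))"
    using noise_gaussian unfolding gaussian_vec_def by simp
  finally show ?thesis by (simp add: scaleR_matrix_vector_assoc[symmetric])
qed

lemma char_noise_sum:
  assumes "finite J"
  shows "(\<integral>\<omega>. cis (a + (\<Sum>j\<in>J. w j \<bullet> e j \<omega>)) \<partial>M) =
    cis a * complex_of_real (exp (- (sigma\<^sup>2 * (\<Sum>j\<in>J. w j \<bullet> w j)) / 2))"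
proof -
  have cis_meas: "(\<lambda>x. cis (w j \<bullet> x)) \<in> borel_measurable borel" for j
    by (intro borel_measurable_continuous_onI continuous_intros)
  have "indep_vars (\<lambda>_. borel) (\<lambda>j \<omega>. cis (w j \<bullet> e j \<omega>)) J"
    using indep_vars_compose2[OF indep_vars_subset[OF noise_indep subset_UNIV] cis_meas] by simp
  moreover have "integrable M (\<lambda>\<omega>. cis (w j \<bullet> e j \<omega>))" for j
    using measurable_compose[OF noise_measurable cis_meas]
    by (intro integrable_const_bound[where B=1]) auto
  ultimately have "(\<integral>\<omega>. (\<Prod>j\<in>J. cis (w j \<bullet> e j \<omega>)) \<partial>M) = (\<Prod>j\<in>J. \<integral>\<omega>. cis (w j \<bullet> e j \<omega>) \<partial>M)"
    using indep_vars_lebesgue_integral[OF assms] by blast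
  also have "\<dots> = complex_of_real (\<Prod>j\<in>J. exp (- (sigma\<^sup>2 * (w j \<bullet> w j)) / 2))"
    by (simp add: char_noise)
  also have "(\<Prod>j\<in>J. exp (- (sigma\<^sup>2 * (w j \<bullet> w j)) / 2)) = exp (- (sigma\<^sup>2 * (\<Sum>j\<in>J. w j \<bullet> w j)) / 2)"
    using exp_sum[OF assms, of "\<lambda>j. - (sigma\<^sup>2 * (w j \<bullet> w j)) / 2"]
    by (simp add: sum_distrib_left sum_divide_distrib sum_negf)
  finally show ?thesis by (simp add: cis_sum cis_mult[symmetric])
qed

lemma gaussian_vec_linear_noise:
  assumes "finite J"
  shows "gaussian_vec b (sigma\<^sup>2 *\<^sub>R (\<Sum>j\<in>J. B j ** transpose (B j)))
    (distr M borel (\<lambda>\<omega>. b + (\<Sum>j\<in>J. B j *v e j \<omega>)))"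
  unfolding gaussian_vec_def
proof (intro conjI allI)
  have meas: "(\<lambda>\<omega>. b + (\<Sum>j\<in>J. B j *v e j \<omega>)) \<in> borel_measurable M"
    by measurable
  then show "prob_space (distr M borel (\<lambda>\<omega>. b + (\<Sum>j\<in>J. B j *v e j \<omega>)))"
    by (rule prob_space_distr)
  show "sets (distr M borel (\<lambda>\<omega>. b + (\<Sum>j\<in>J. B j *v e j \<omega>))) = sets borel" by simp
  fix s
  have "(\<integral>x. cis (s \<bullet> x) \<partial>distr M borel (\<lambda>\<omega>. b + (\<Sum>j\<in>J. B j *v e j \<omega>))) =
      (\<integral>\<omega>. cis (s \<bullet> b + (\<Sum>j\<in>J. (transpose (B j) *v s) \<bullet> e j \<omega>)) \<partial>M)"
    using meas by (subst integral_distr)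
      (auto intro!: borel_measurable_continuous_onI continuous_intros
        simp: inner_add_right inner_sum_right inner_matrix_vector_mult)
  also have "\<dots> = cis (s \<bullet> b) * complex_of_real (exp (- (s \<bullet> ((sigma\<^sup>2 *\<^sub>R (\<Sum>j\<in>J. B j ** transpose (B j))) *v s)) / 2))"
    using assms
    by (simp add: char_noise_sum scaleR_matrix_vector_assoc[symmetric] sum_matrix_vector_mult
        matrix_vector_mul_assoc[symmetric] inner_sum_right inner_matrix_vector_mult)
  finally show "(\<integral>x. cis (s \<bullet> x) \<partial>distr M borel (\<lambda>\<omega>. b + (\<Sum>j\<in>J. B j *v e j \<omega>))) =
      cis (s \<bullet> b) * complex_of_real (exp (- (s \<bullet> ((sigma\<^sup>2 *\<^sub>R (\<Sum>j\<in>J. B j ** transpose (B j))) *v s)) / 2))" .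
qed

end

section \<open>The filtered signal\<close>

lemma sum_atMost_rev: "(\<Sum>j\<le>t. f (t - j)) = (\<Sum>k\<le>(t::nat). f k)"
  by (rule sum.reindex_bij_witness[of _ "\<lambda>k. t - k" "\<lambda>j. t - j"]) auto

locale arma_model = orthonormal_eigenbasis u A mu + gaussian_white_noise M e sigma
  for u :: "'n::finite \<Rightarrow> real^'n" and A mu and M :: "'a measure"
    and e :: "nat \<Rightarrow> 'a \<Rightarrow> real^'n" and sigma +
  fixes K :: nat and c :: real and psi phi :: "nat \<Rightarrow> complex"
  assumes real_response: "\<And>k. (\<Sum>l\<in>{1..K}. phi l * psi l ^ k) \<in> \<real>"
    and stable: "\<And>l i. l \<in> {1..K} \<Longrightarrow> cmod (psi l) * \<bar>mu i\<bar> < 1"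
begin

definition filtered :: "real^'n \<Rightarrow> nat \<Rightarrow> 'a \<Rightarrow> real^'n" where
  "filtered m t \<omega> = re_vec (arma_output K c psi phi (cmat A) (\<lambda>t. cvec (m + e t \<omega>)) t)"

definition impulse_matrix :: "nat \<Rightarrow> real^'n^'n" where
  "impulse_matrix k = spectral_matrix u (\<lambda>i. Re (arma_impulse K c psi phi k) * mu i ^ k)"

definition gain :: "nat \<Rightarrow> 'n \<Rightarrow> real" where
  "gain t i = (\<Sum>k\<le>t. Re (arma_impulse K c psi phi k) * mu i ^ k)"

definition energy :: "nat \<Rightarrow> 'n \<Rightarrow> real" where
  "energy t i = (\<Sum>k\<le>t. (Re (arma_impulse K c psi phi k) * mu i ^ k)\<^sup>2)"

text \<open>With \<open>g = gain t\<close> and \<open>q = energy t\<close> this has the law of \<open>filtered m t\<close>, but it is driven by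
  \<open>e 0\<close> alone, so it converges pointwise as \<open>t \<rightarrow> \<infinity>\<close>.\<close>

definition coupled :: "real^'n \<Rightarrow> ('n \<Rightarrow> real) \<Rightarrow> ('n \<Rightarrow> real) \<Rightarrow> 'a \<Rightarrow> real^'n" where
  "coupled m g q \<omega> = spectral_matrix u g *v m + spectral_matrix u (\<lambda>i. sqrt (q i)) *v e 0 \<omega>"

lemma filtered_eq:
  "filtered m t \<omega> = spectral_matrix u (gain t) *v m + (\<Sum>j\<le>t. impulse_matrix (t - j) *v e j \<omega>)"
proof -
  have "filtered m t \<omega> = (\<Sum>k\<le>t. impulse_matrix k *v m) + (\<Sum>k\<le>t. impulse_matrix k *v e (t - k) \<omega>)"
    by (simp add: filtered_def re_arma_output_eq impulse_matrix_def matrix_vector_right_distrib sum.distrib)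
  also have "(\<Sum>k\<le>t. impulse_matrix k *v m) = spectral_matrix u (gain t) *v m"
    by (simp add: sum_matrix_vector_mult[symmetric] impulse_matrix_def sum_spectral_matrix gain_def[abs_def])
  also have "(\<Sum>k\<le>t. impulse_matrix k *v e (t - k) \<omega>) = (\<Sum>j\<le>t. impulse_matrix (t - j) *v e j \<omega>)"
    by (subst sum_atMost_rev[symmetric]) (intro sum.cong; simp)
  finally show ?thesis .
qed

lemma energy_nonneg: "energy t i \<ge> 0"
  unfolding energy_def by (simp add: sum_nonneg)

lemma gaussian_vec_filtered:
  "gaussian_vec (spectral_matrix u (gain t) *v m) (sigma\<^sup>2 *\<^sub>R spectral_matrix u (energy t))
    (distr M borel (filtered m t))"
proof -
  have "(\<Sum>j\<le>t. impulse_matrix (t - j) ** transpose (impulse_matrix (t - j))) = spectral_matrix u (energy t)"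
    using sum_atMost_rev[of "\<lambda>k. impulse_matrix k ** transpose (impulse_matrix k)" t]
    by (simp add: impulse_matrix_def transpose_spectral_matrix spectral_matrix_mult sum_spectral_matrix
        energy_def[abs_def] power2_eq_square)
  then show ?thesis
    using gaussian_vec_linear_noise[of "{..t}" "spectral_matrix u (gain t) *v m" "\<lambda>j. impulse_matrix (t - j)"]
    by (simp add: filtered_eq[abs_def])
qed

lemma gaussian_vec_coupled:
  assumes "\<And>i. q i \<ge> 0"
  shows "gaussian_vec (spectral_matrix u g *v m) (sigma\<^sup>2 *\<^sub>R spectral_matrix u q) (distr M borel (coupled m g q))"
proof -
  have "spectral_matrix u (\<lambda>i. sqrt (q i)) ** transpose (spectral_matrix u (\<lambda>i. sqrt (q i))) = spectral_matrix u q"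
    using assms by (simp add: transpose_spectral_matrix spectral_matrix_mult)
  then show ?thesis
    using gaussian_vec_linear_noise[of "{0}" "spectral_matrix u g *v m" "\<lambda>_. spectral_matrix u (\<lambda>i. sqrt (q i))"]
    by (simp add: coupled_def[abs_def])
qed

lemma distr_filtered_eq_coupled: "distr M borel (filtered m t) = distr M borel (coupled m (gain t) (energy t))"
  using gaussian_vec_filtered gaussian_vec_coupled[OF energy_nonneg] by (rule gaussian_vec_unique)

lemma gain_tendsto: "(\<lambda>t. gain t i) \<longlonglongrightarrow> Re (arma_response K c psi phi (mu i))"
  using arma_impulse_sums[OF stable] unfolding gain_def[abs_def] sums_def_le .

lemma energy_tendsto: "(\<lambda>t. energy t i) \<longlonglongrightarrow> Re (arma_energy K c psi phi (mu i))"
  using arma_impulse_energy_sums[OF real_response stable] unfolding energy_def[abs_def] sums_def_le .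

theorem filtered_converges_gaussian:
  "\<exists>N. gaussian_vec (\<Sum>i\<in>UNIV. (Re (arma_response K c psi phi (mu i)) * (u i \<bullet> m)) *\<^sub>R u i)
      (\<Sum>i\<in>UNIV. (sigma\<^sup>2 * Re (arma_energy K c psi phi (mu i))) *\<^sub>R outer (u i)) N \<and>
    converges_in_distribution (\<lambda>t. distr M borel (filtered m t)) N"
proof -
  define g where "g i = Re (arma_response K c psi phi (mu i))" for i
  define q where "q i = Re (arma_energy K c psi phi (mu i))" for i
  have "q i \<ge> 0" for i
    unfolding q_def by (rule LIMSEQ_le_const[OF energy_tendsto]) (use energy_nonneg in blast)
  then have "gaussian_vec (spectral_matrix u g *v m) (sigma\<^sup>2 *\<^sub>R spectral_matrix u q) (distr M borel (coupled m g q))"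
    by (rule gaussian_vec_coupled)
  moreover have "spectral_matrix u g *v m = (\<Sum>i\<in>UNIV. (Re (arma_response K c psi phi (mu i)) * (u i \<bullet> m)) *\<^sub>R u i)"
    by (simp add: spectral_matrix_mult_vec g_def)
  moreover have "sigma\<^sup>2 *\<^sub>R spectral_matrix u q = (\<Sum>i\<in>UNIV. (sigma\<^sup>2 * Re (arma_energy K c psi phi (mu i))) *\<^sub>R outer (u i))"
    by (simp add: spectral_matrix_def scaleR_sum_right q_def)
  moreover have "(\<lambda>t. coupled m (gain t) (energy t) \<omega>) \<longlonglongrightarrow> coupled m g q \<omega>" for \<omega>
    unfolding coupled_def spectral_matrix_mult_vec g_def q_def
    by (intro tendsto_intros gain_tendsto energy_tendsto)
  then have "converges_in_distribution (\<lambda>t. distr M borel (filtered m t)) (distr M borel (coupled m g q))"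
    unfolding distr_filtered_eq_coupled
    by (intro converges_in_distribution_pointwise prob_space_axioms) (simp_all add: coupled_def[abs_def])
  ultimately show ?thesis by metis
qed

end

theorem proposition1:
  fixes W :: "real^'n^'n"
    and u :: "'n \<Rightarrow> real^'n" and mu :: "'n \<Rightarrow> real"
    and M :: "'a measure" and m :: "real^'n" and e :: "nat \<Rightarrow> 'a \<Rightarrow> real^'n"
    and sigma c :: real and K :: nat and psi phi :: "nat \<Rightarrow> complex"
  assumes W_sym: "\<forall>i j. W $ i $ j = W $ j $ i"
    and W_nonneg: "\<forall>i j. W $ i $ j \<ge> 0"
    and deg_pos: "\<forall>i. degree W i > 0"
    and eig: "\<forall>i. norm_laplacian W *v u i = mu i *\<^sub>R u i"
    and orthonormal: "\<forall>i j. u i \<bullet> u j = (if i = j then 1 else 0)"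
    and prob: "prob_space M"
    and e_meas: "\<forall>t. e t \<in> borel_measurable M"
    and e_indep: "prob_space.indep_vars M (\<lambda>_. borel) e UNIV"
    and e_gauss: "\<forall>t. gaussian_vec 0 (sigma\<^sup>2 *\<^sub>R mat 1) (distr M borel (e t))"
    and K_pos: "K \<ge> 1"
    and real_response: "\<forall>k. (\<Sum>l\<in>{1..K}. phi l * psi l ^ k) \<in> \<real>"
    and stable: "(MAX l\<in>{1..K}. cmod (psi l)) * spectral_radius (norm_laplacian W) < 1"
  shows "let L = norm_laplacian W;
             y = (\<lambda>\<omega> t. cvec (m + e t \<omega>));
             z = (\<lambda>t \<omega>. re_vec (arma_output K c psi phi (cmat L) (y \<omega>) t));
             h = (\<lambda>x::real. complex_of_real c + (\<Sum>l\<in>{1..K}. phi l / (1 - psi l * complex_of_real x)));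
             \<eta> = complex_of_real (c * sigma\<^sup>2) * (complex_of_real c + 2 * (\<Sum>l\<in>{1..K}. phi l));
             \<kappa> = (\<lambda>x::real. (\<Sum>l\<in>{1..K}. \<Sum>l'\<in>{1..K}.
                     complex_of_real (sigma\<^sup>2) * phi l * cnj (phi l')
                       / (1 - psi l * cnj (psi l') * complex_of_real (x\<^sup>2))) + \<eta>);
             zbar = (\<Sum>i\<in>UNIV. (Re (h (mu i)) * (u i \<bullet> m)) *\<^sub>R u i);
             Q = (\<Sum>i\<in>UNIV. Re (\<kappa> (mu i)) *\<^sub>R outer (u i))
         in \<exists>N. gaussian_vec zbar Q N \<and>
               converges_in_distribution (\<lambda>t. distr M borel (z t)) N"
proof -
  interpret eigenbasis: orthonormal_eigenbasis u "norm_laplacian W" mu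
    using orthonormal eig by unfold_locales auto
  interpret arma_model u "norm_laplacian W" mu M e sigma K c psi phi
    unfolding arma_model_def arma_model_axioms_def gaussian_white_noise_def gaussian_white_noise_axioms_def
    using eigenbasis.orthonormal_eigenbasis_axioms prob e_meas e_indep e_gauss real_response
      eigenbasis.cmod_mult_eigenvalue_less_one[OF finite_atLeastAtMost _ stable]
    by blast
  have filtered: "(\<lambda>\<omega>. re_vec (arma_output K c psi phi (cmat (norm_laplacian W)) (\<lambda>t. cvec (m + e t \<omega>)) t))
      = filtered m t" for t
    by (simp add: fun_eq_iff filtered_def)
  show ?thesis
    unfolding Let_def scaled_arma_energy_eq arma_response_def[symmetric] filtered
    using filtered_converges_gaussian[of m] by simp
qed

end
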